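(* Let $\mathcal{G}$ be a groupoid with finite set of identities $\mathcal{G}_0$, let $\alpha = (\{ D_g \}, \{ \alpha_g \}, \{ w_{g,h} \})$ be a groupoid twisted partial action of $\mathcal{G}$ on a ring $R$ such that each $D_e$, $e\in\mathcal{G}_0$, has identity $1_e$, and let $\beta = (\{ E_g \}, \{ \beta_g \}, \{ u_{g,h} \})$ be a groupoid twisted global action of $\mathcal{G}$ on a ring $T$ which is a globalization of $\alpha$, where $\varphi_e(D_e)$ is identified with $D_e$ for each $e\in\mathcal{G}_0$ (so that $A=R\rtimes_{\alpha,w}\mathcal{G}$ is regarded as a subset of $B=T\rtimes_{\beta,u}\mathcal{G}$). Let $1_A=\sum_{e\in\mathcal{G}_0}1_e\delta_e$. Then: (i) $B1_A = \{ \sum_{g} c_g\delta_g \text{ (finite)} : c_g \in \beta_g(D_{d(g)}) \}$; (ii) $1_AB = \{ \sum_{g} c_g\delta_g \text{ (finite)} : c_g \in D_{r(g)} \}$; (iii) $1_AB1_A = A$; (iv) $B1_AB = B$. Here $B1_A=\{b1_A: b\in B\}$, $1_AB=\{1_Ab: b\in B\}$, $1_AB1_A=\{1_Ab1_A:b\in B\}$, and $B1_AB$ is the set of finite sums of elements $b1_Ab'$, $b,b'\in B$.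
   Context: Rings are associative, not necessarily unital. Groupoid: nonempty set $\mathcal{G}$ with partial associative product, each $g$ having right identity $d(g)=g^{-1}g$, left identity $r(g)=gg^{-1}$, inverse $g^{-1}$; $gh$ defined iff $d(g)=r(h)$; $\mathcal{G}_0$ the identities, $\mathcal{G}^2$ the composable pairs, $\mathcal{G}^3$ composable triples. $\mathcal{M}(A)$ is the multiplier ring of $A$ (pairs $(R,L)$ of a right-module endomorphism written on the right and a left-module endomorphism with $(aR)b=a(Lb)$; $aw=(a)R$, $wa=L(a)$); for unital $A$, $\mathcal{M}(A)\cong A$. A groupoid twisted partial action of $\mathcal{G}$ on a ring $R$: a triple $(\{D_g\},\{\alpha_g\},\{w_{g,h}\}_{(g,h)\in\mathcal{G}^2})$, $D_{r(g)}$ an ideal of $R$, $D_g$ an ideal of $D_{r(g)}$, $\alpha_g:D_{g^{-1}}\to D_g$ ring isomorphisms, $w_{g,h}$ invertible in $\mathcal{M}(D_gD_{gh})$, with for all $(g,h,t)\in\mathcal{G}^3$: (i) $D_g^2=D_g$, $D_gD_h=D_hD_g$; (ii) $D_e=D_{r(e)}$, $\alpha_e=\mathrm{id}$ for $e\in\mathcal{G}_0$; (iii) $\alpha_g(D_{g^{-1}}D_h)=D_gD_{gh}$; (iv) $\alpha_g\alpha_h(a)=w_{g,h}\alpha_{gh}(a)w_{g,h}^{-1}$ for $a\in D_{h^{-1}}D_{h^{-1}g^{-1}}$; (v) $w_{r(g),g}=w_{g,d(g)}=\mathrm{id}_{\mathcal{M}(D_g)}$; (vi) $\alpha_g(aw_{h,t})w_{g,ht}=\alpha_g(a)w_{g,h}w_{gh,t}$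 for $a\in D_{g^{-1}}D_hD_{ht}$. It is global if $D_g=D_{r(g)}$ for all $g$. A global action $\beta=(\{E_g\},\{\beta_g\},\{u_{g,h}\})$ on $T$ is a globalization of $\alpha$ if there are ring monomorphisms $\varphi_e:D_e\to E_e$ ($e\in\mathcal{G}_0$) with: $\varphi_e(D_e)$ an ideal of $E_e$; $E_g=\sum_{r(h)=r(g)}\beta_h(\varphi_{d(h)}(D_{d(h)}))$; $\varphi_{r(g)}(D_g)=\varphi_{r(g)}(D_{r(g)})\cap\beta_g(\varphi_{d(g)}(D_{d(g)}))$; $\beta_g\varphi_{d(g)}=\varphi_{r(g)}\alpha_g$ on $D_{g^{-1}}$; $\varphi_{r(g)}(aw_{g,h})=\varphi_{r(g)}(a)u_{g,h}$ and $\varphi_{r(g)}(w_{g,h}a)=u_{g,h}\varphi_{r(g)}(a)$ for $a\in D_gD_{gh}$. Twisted crossed product: $R\rtimes_{\alpha,w}\mathcal{G}=\bigoplus_g D_g\delta_g$ with $(a_g\delta_g)(b_h\delta_h)=\alpha_g(\alpha_g^{-1}(a_g)b_h)w_{g,h}\delta_{gh}$ if $(g,h)\in\mathcal{G}^2$ and $0$ otherwise; $T\rtimes_{\beta,u}\mathcal{G}$ is defined in the same way. *)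

theory Defs
  imports Main
begin

(* Groupoid given by carrier G, domain d, range r, inverse iv and partial product m;
   m g h is meaningful iff d g = r h. *)
definition groupoid ::
  "'g set \<Rightarrow> ('g \<Rightarrow> 'g) \<Rightarrow> ('g \<Rightarrow> 'g) \<Rightarrow> ('g \<Rightarrow> 'g) \<Rightarrow> ('g \<Rightarrow> 'g \<Rightarrow> 'g) \<Rightarrow> bool" where
  "groupoid G d r iv m \<longleftrightarrow>
     G \<noteq> {} \<and>
     (\<forall>g\<in>G. d g \<in> G \<and> r g \<in> G \<and> iv g \<in> G) \<and>
     (\<forall>g\<in>G. \<forall>h\<in>G. d g = r h \<longrightarrow> m g h \<in> G \<and> d (m g h) = d h \<and> r (m g h) = r g) \<and>
     (\<forall>g\<in>G. \<forall>h\<in>G. \<forall>k\<in>G. d g = r h \<and> d h = r k \<longrightarrow> m (m g h) k = m g (m h k)) \<and>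
     (\<forall>g\<in>G. d (d g) = d g \<and> r (d g) = d g \<and> d (r g) = r g \<and> r (r g) = r g) \<and>
     (\<forall>g\<in>G. m g (d g) = g \<and> m (r g) g = g) \<and>
     (\<forall>g\<in>G. d (iv g) = r g \<and> r (iv g) = d g \<and> m (iv g) g = d g \<and> m g (iv g) = r g)"

definition is_ideal :: "'a::ring set \<Rightarrow> 'a set \<Rightarrow> bool" where
  "is_ideal I S \<longleftrightarrow> I \<subseteq> S \<and> 0 \<in> I \<and>
     (\<forall>a\<in>I. \<forall>b\<in>I. a + b \<in> I) \<and> (\<forall>a\<in>I. - a \<in> I) \<and>
     (\<forall>s\<in>S. \<forall>a\<in>I. s * a \<in> I \<and> a * s \<in> I)"

definition idealprod :: "'a::ring set \<Rightarrow> 'a set \<Rightarrow> 'a set" where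
  "idealprod A B = {x. \<exists>(n::nat) f h. x = (\<Sum>i<n. f i * h i) \<and> (\<forall>i<n. f i \<in> A \<and> h i \<in> B)}"

definition sum_sets :: "'i set \<Rightarrow> ('i \<Rightarrow> 'a::ring set) \<Rightarrow> 'a set" where
  "sum_sets I S = {x. \<exists>(n::nat) f j. x = (\<Sum>i<n. f i) \<and> (\<forall>i<n. j i \<in> I \<and> f i \<in> S (j i))}"

definition ring_iso_on :: "('a::ring \<Rightarrow> 'b::ring) \<Rightarrow> 'a set \<Rightarrow> 'b set \<Rightarrow> bool" where
  "ring_iso_on f A B \<longleftrightarrow> bij_betw f A B \<and>
     (\<forall>a\<in>A. \<forall>b\<in>A. f (a + b) = f a + f b \<and> f (a * b) = f a * f b)"

definition ring_mono_on :: "('a::ring \<Rightarrow> 'b::ring) \<Rightarrow> 'a set \<Rightarrow> 'b set \<Rightarrow> bool" where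
  "ring_mono_on f A B \<longleftrightarrow> inj_on f A \<and> f ` A \<subseteq> B \<and>
     (\<forall>a\<in>A. \<forall>b\<in>A. f (a + b) = f a + f b \<and> f (a * b) = f a * f b)"

(* multiplier (R,L) of the ring A: a w = R a, w a = L a *)
definition is_mult :: "'a::ring set \<Rightarrow> ('a \<Rightarrow> 'a) \<Rightarrow> ('a \<Rightarrow> 'a) \<Rightarrow> bool" where
  "is_mult A Rm Lm \<longleftrightarrow> (\<forall>a\<in>A. Rm a \<in> A \<and> Lm a \<in> A) \<and>
     (\<forall>a\<in>A. \<forall>b\<in>A. Rm (a + b) = Rm a + Rm b \<and> Lm (a + b) = Lm a + Lm b \<and>
        Rm (a * b) = a * Rm b \<and> Lm (a * b) = Lm a * b \<and> Rm a * b = a * Lm b)"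

definition inv_mult :: "'a::ring set \<Rightarrow> ('a \<Rightarrow> 'a) \<Rightarrow> ('a \<Rightarrow> 'a) \<Rightarrow> ('a \<Rightarrow> 'a) \<Rightarrow> ('a \<Rightarrow> 'a) \<Rightarrow> bool" where
  "inv_mult A Rm Lm Rm' Lm' \<longleftrightarrow> is_mult A Rm Lm \<and> is_mult A Rm' Lm' \<and>
     (\<forall>a\<in>A. Rm' (Rm a) = a \<and> Rm (Rm' a) = a \<and> Lm (Lm' a) = a \<and> Lm' (Lm a) = a)"

(* groupoid twisted partial action (D, alpha, w) of G on the ring 'a;
   w_{g,h} = (wR g h, wL g h) with inverse (wiR g h, wiL g h) *)
definition twisted_partial_action ::
  "'g set \<Rightarrow> ('g \<Rightarrow> 'g) \<Rightarrow> ('g \<Rightarrow> 'g) \<Rightarrow> ('g \<Rightarrow> 'g) \<Rightarrow> ('g \<Rightarrow> 'g \<Rightarrow> 'g) \<Rightarrow>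
   ('g \<Rightarrow> 'a::ring set) \<Rightarrow> ('g \<Rightarrow> 'a \<Rightarrow> 'a) \<Rightarrow>
   ('g \<Rightarrow> 'g \<Rightarrow> 'a \<Rightarrow> 'a) \<Rightarrow> ('g \<Rightarrow> 'g \<Rightarrow> 'a \<Rightarrow> 'a) \<Rightarrow>
   ('g \<Rightarrow> 'g \<Rightarrow> 'a \<Rightarrow> 'a) \<Rightarrow> ('g \<Rightarrow> 'g \<Rightarrow> 'a \<Rightarrow> 'a) \<Rightarrow> bool" where
  "twisted_partial_action G d r iv m D \<alpha> wR wL wiR wiL \<longleftrightarrow>
     (\<forall>g\<in>G. is_ideal (D (r g)) UNIV \<and> is_ideal (D g) (D (r g))) \<and>
     (\<forall>g\<in>G. ring_iso_on (\<alpha> g) (D (iv g)) (D g)) \<and>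
     (\<forall>g\<in>G. \<forall>h\<in>G. d g = r h \<longrightarrow>
        inv_mult (idealprod (D g) (D (m g h))) (wR g h) (wL g h) (wiR g h) (wiL g h)) \<and>
     (\<forall>g\<in>G. \<forall>h\<in>G. \<forall>t\<in>G. d g = r h \<and> d h = r t \<longrightarrow>
        idealprod (D g) (D g) = D g \<and> idealprod (D g) (D h) = idealprod (D h) (D g) \<and>
        \<alpha> g ` idealprod (D (iv g)) (D h) = idealprod (D g) (D (m g h)) \<and>
        (\<forall>a\<in>idealprod (D (iv h)) (D (iv (m g h))).
            \<alpha> g (\<alpha> h a) = wiR g h (wL g h (\<alpha> (m g h) a))) \<and>
        (\<forall>a\<in>D g. wR (r g) g a = a \<and> wL (r g) g a = a \<and> wR g (d g) a = a \<and> wL g (d g) a = a) \<and>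
        (\<forall>a\<in>idealprod (idealprod (D (iv g)) (D h)) (D (m h t)).
            wR g (m h t) (\<alpha> g (wR h t a)) = wR (m g h) t (wR g h (\<alpha> g a)))) \<and>
     (\<forall>e\<in>d ` G. D e = D (r e) \<and> (\<forall>a\<in>D e. \<alpha> e a = a))"

definition global_action where
  "global_action G d r iv m E \<beta> uR uL uiR uiL \<longleftrightarrow>
     twisted_partial_action G d r iv m E \<beta> uR uL uiR uiL \<and> (\<forall>g\<in>G. E g = E (r g))"

definition globalization ::
  "'g set \<Rightarrow> ('g \<Rightarrow> 'g) \<Rightarrow> ('g \<Rightarrow> 'g) \<Rightarrow> ('g \<Rightarrow> 'g) \<Rightarrow> ('g \<Rightarrow> 'g \<Rightarrow> 'g) \<Rightarrow>
   ('g \<Rightarrow> 'a::ring set) \<Rightarrow> ('g \<Rightarrow> 'a \<Rightarrow> 'a) \<Rightarrow>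
   ('g \<Rightarrow> 'g \<Rightarrow> 'a \<Rightarrow> 'a) \<Rightarrow> ('g \<Rightarrow> 'g \<Rightarrow> 'a \<Rightarrow> 'a) \<Rightarrow>
   ('g \<Rightarrow> 'b::ring set) \<Rightarrow> ('g \<Rightarrow> 'b \<Rightarrow> 'b) \<Rightarrow>
   ('g \<Rightarrow> 'g \<Rightarrow> 'b \<Rightarrow> 'b) \<Rightarrow> ('g \<Rightarrow> 'g \<Rightarrow> 'b \<Rightarrow> 'b) \<Rightarrow>
   ('g \<Rightarrow> 'a \<Rightarrow> 'b) \<Rightarrow> bool" where
  "globalization G d r iv m D \<alpha> wR wL E \<beta> uR uL \<phi> \<longleftrightarrow>
     (\<forall>e\<in>d ` G. ring_mono_on (\<phi> e) (D e) (E e) \<and> is_ideal (\<phi> e ` D e) (E e)) \<and>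
     (\<forall>g\<in>G. E g = sum_sets {h\<in>G. r h = r g} (\<lambda>h. \<beta> h ` \<phi> (d h) ` D (d h))) \<and>
     (\<forall>g\<in>G. \<phi> (r g) ` D g = \<phi> (r g) ` D (r g) \<inter> \<beta> g ` \<phi> (d g) ` D (d g)) \<and>
     (\<forall>g\<in>G. \<forall>a\<in>D (iv g). \<beta> g (\<phi> (d g) a) = \<phi> (r g) (\<alpha> g a)) \<and>
     (\<forall>g\<in>G. \<forall>h\<in>G. d g = r h \<longrightarrow> (\<forall>a\<in>idealprod (D g) (D (m g h)).
        \<phi> (r g) (wR g h a) = uR g h (\<phi> (r g) a) \<and> \<phi> (r g) (wL g h a) = uL g h (\<phi> (r g) a)))"

(* elements  sum_g c_g delta_g  (finite) with c_g \<in> P g, represented as finitely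
   supported functions G \<rightarrow> ring *)
definition cp_set :: "'g set \<Rightarrow> ('g \<Rightarrow> 'a::zero set) \<Rightarrow> ('g \<Rightarrow> 'a) set" where
  "cp_set G P = {x. finite {g. x g \<noteq> 0} \<and> (\<forall>g. x g \<noteq> 0 \<longrightarrow> g \<in> G) \<and> (\<forall>g\<in>G. x g \<in> P g)}"

(* multiplication of the twisted crossed product:
   (a delta_g)(b delta_h) = beta_g(beta_g^{-1}(a) b) u_{g,h} delta_{gh} if d g = r h, else 0 *)
definition cp_mult ::
  "'g set \<Rightarrow> ('g \<Rightarrow> 'g) \<Rightarrow> ('g \<Rightarrow> 'g) \<Rightarrow> ('g \<Rightarrow> 'g) \<Rightarrow> ('g \<Rightarrow> 'g \<Rightarrow> 'g) \<Rightarrow>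
   ('g \<Rightarrow> 'a::ring set) \<Rightarrow> ('g \<Rightarrow> 'a \<Rightarrow> 'a) \<Rightarrow> ('g \<Rightarrow> 'g \<Rightarrow> 'a \<Rightarrow> 'a) \<Rightarrow>
   ('g \<Rightarrow> 'a) \<Rightarrow> ('g \<Rightarrow> 'a) \<Rightarrow> ('g \<Rightarrow> 'a)" where
  "cp_mult G d r iv m E \<beta> uR x y = (\<lambda>k.
     \<Sum>p\<in>{(g, h). g \<in> G \<and> h \<in> G \<and> x g \<noteq> 0 \<and> y h \<noteq> 0 \<and> d g = r h \<and> m g h = k}.
        uR (fst p) (snd p)
          (\<beta> (fst p) (inv_into (E (iv (fst p))) (\<beta> (fst p)) (x (fst p)) * y (snd p))))"

end

theory Submission
  imports Defs
begin

(* 1_A is supported on the identities, and for an identity e the only products involving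
   e delta_e are g e = g (e = d g) and e g = g (e = r g), where the twist u is trivial and
   beta_e is the identity.  Hence b 1_A multiplies the coefficient b_g by the unit
   beta_g(1_(d g)) of beta_g(D_(d g)), and 1_A b multiplies it by the unit 1_(r g) of D_(r g).
   These units act as identities on the ideals they generate, which gives (i) and (ii), and
   (iii) follows from D_g = D_(r g) \<inter> beta_g(D_(d g)).  For (iv), E_g is the sum of the
   beta_h(D_(d h)) with r h = r g, and for c in beta_h(D_(d h)) and t = h^-1 g,
   c delta_g = (beta_h(1_(d h)) delta_h) 1_A (y delta_t) with y = beta_h^-1(u_(h,t)^-1 c). *)

lemma is_ideal_sum: "is_ideal I S \<Longrightarrow> (\<And>x. x \<in> A \<Longrightarrow> f x \<in> I) \<Longrightarrow> sum f A \<in> I"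
  by (induction A rule: infinite_finite_induct) (auto simp: is_ideal_def)

lemma sum_subset_singleton: "P \<subseteq> {a} \<Longrightarrow> (a \<notin> P \<Longrightarrow> f a = 0) \<Longrightarrow> sum f P = f a"
  by (cases "a \<in> P") (auto simp: subset_singleton_iff)

lemma cp_setI:
  "finite {k. x k \<noteq> 0} \<Longrightarrow> (\<And>k. x k \<noteq> 0 \<Longrightarrow> k \<in> G) \<Longrightarrow> (\<And>k. k \<in> G \<Longrightarrow> x k \<in> P k)
    \<Longrightarrow> x \<in> cp_set G P"
  by (auto simp: cp_set_def)

lemma cp_setD:
  assumes "x \<in> cp_set G P"
  shows "finite {k. x k \<noteq> 0}" and "k \<notin> G \<Longrightarrow> x k = 0" and "k \<in> G \<Longrightarrow> x k \<in> P k"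
  using assms by (auto simp: cp_set_def)

lemma cp_set_mono: "(\<And>k. k \<in> G \<Longrightarrow> P k \<subseteq> Q k) \<Longrightarrow> cp_set G P \<subseteq> cp_set G Q"
  by (auto simp: cp_set_def)

lemma cp_set_cong: "(\<And>k. k \<in> G \<Longrightarrow> P k = Q k) \<Longrightarrow> cp_set G P = cp_set G Q"
  by (simp add: cp_set_def)

lemma cp_set_pointwise_retraction:
  assumes into: "\<And>k c. k \<in> G \<Longrightarrow> c \<in> P k \<Longrightarrow> f k c \<in> Q k"
    and sub: "\<And>k. k \<in> G \<Longrightarrow> Q k \<subseteq> P k"
    and fixed: "\<And>k c. k \<in> G \<Longrightarrow> c \<in> Q k \<Longrightarrow> f k c = c"
    and zero: "\<And>k. f k 0 = 0"
  shows "(\<lambda>x k. f k (x k)) ` cp_set G P = cp_set G Q"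
proof
  show "(\<lambda>x k. f k (x k)) ` cp_set G P \<subseteq> cp_set G Q"
  proof
    fix y assume "y \<in> (\<lambda>x k. f k (x k)) ` cp_set G P"
    then obtain x where x: "x \<in> cp_set G P" and y: "y = (\<lambda>k. f k (x k))" by blast
    have "{k. y k \<noteq> 0} \<subseteq> {k. x k \<noteq> 0}" using zero y by auto
    then show "y \<in> cp_set G Q"
      using cp_setD[OF x] into zero y by (intro cp_setI) (auto intro: finite_subset)
  qed
next
  show "cp_set G Q \<subseteq> (\<lambda>x k. f k (x k)) ` cp_set G P"
  proof
    fix c assume c: "c \<in> cp_set G Q"
    have "c = (\<lambda>k. f k (c k))"
      using cp_setD(2,3)[OF c] fixed zero by metis
    moreover have "c \<in> cp_set G P" using c cp_set_mono[of G Q P] sub by blast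
    ultimately show "c \<in> (\<lambda>x k. f k (x k)) ` cp_set G P" by blast
  qed
qed

definition cp_single :: "'g \<Rightarrow> 'a::zero \<Rightarrow> 'g \<Rightarrow> 'a" where
  "cp_single g c = (\<lambda>k. if k = g then c else 0)"

lemma cp_single_sum: "cp_single g (sum f A) = (\<lambda>k. \<Sum>a\<in>A. cp_single g (f a) k)"
  by (auto simp: cp_single_def)

lemma finite_support_sum_single:
  assumes "finite {k. x k \<noteq> 0}"
  shows "x = (\<lambda>k. \<Sum>g\<in>{k. x k \<noteq> 0}. cp_single g (x g) k)"
  by (auto simp: cp_single_def sum.delta'[OF assms])

lemma cp_single_in_cp_set:
  "g \<in> G \<Longrightarrow> c \<in> P g \<Longrightarrow> (\<And>k. k \<in> G \<Longrightarrow> 0 \<in> P k) \<Longrightarrow> cp_single g c \<in> cp_set G P"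
  by (rule cp_setI) (auto simp: cp_single_def split: if_splits intro: finite_subset[of _ "{g}"])

definition sums_of_products ::
  "('a \<Rightarrow> 'a \<Rightarrow> 'k \<Rightarrow> 'b::comm_monoid_add) \<Rightarrow> 'a set \<Rightarrow> ('k \<Rightarrow> 'b) set" where
  "sums_of_products F S =
     {(\<lambda>k. \<Sum>i<n. F (b i) (b' i) k) | (n::nat) b b'. \<forall>i<n. b i \<in> S \<and> b' i \<in> S}"

lemma sums_of_productsE:
  assumes "x \<in> sums_of_products F S"
  obtains n :: nat and b b' where "x = (\<lambda>k. \<Sum>i<n. F (b i) (b' i) k)" and "\<forall>i<n. b i \<in> S \<and> b' i \<in> S"
  using assms unfolding sums_of_products_def by blast

lemma sums_of_products_zero: "(\<lambda>k. 0) \<in> sums_of_products F S"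
  unfolding sums_of_products_def by force

lemma sums_of_products_add_product:
  assumes "x \<in> sums_of_products F S" and "b \<in> S" and "b' \<in> S"
  shows "(\<lambda>k. x k + F b b' k) \<in> sums_of_products F S"
proof -
  obtain n :: nat and c c' where x: "x = (\<lambda>k. \<Sum>i<n. F (c i) (c' i) k)"
    and cc: "\<forall>i<n. c i \<in> S \<and> c' i \<in> S"
    using assms(1) by (blast elim: sums_of_productsE)
  have "(\<lambda>k. x k + F b b' k) = (\<lambda>k. \<Sum>i<Suc n. F ((c(n := b)) i) ((c'(n := b')) i) k)"
    unfolding x by (auto intro!: sum.cong)
  moreover have "\<forall>i<Suc n. (c(n := b)) i \<in> S \<and> (c'(n := b')) i \<in> S"
    using cc assms(2,3) by (simp add: less_Suc_eq)
  ultimately show ?thesis unfolding sums_of_products_def by blast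
qed

lemma sums_of_products_add:
  assumes x: "x \<in> sums_of_products F S" and y: "y \<in> sums_of_products F S"
  shows "(\<lambda>k. x k + y k) \<in> sums_of_products F S"
proof -
  obtain n :: nat and c c' where y_eq: "y = (\<lambda>k. \<Sum>i<n. F (c i) (c' i) k)"
    and cc: "\<forall>i<n. c i \<in> S \<and> c' i \<in> S"
    using y by (blast elim: sums_of_productsE)
  have "(\<lambda>k. x k + (\<Sum>i<j. F (c i) (c' i) k)) \<in> sums_of_products F S" if "j \<le> n" for j
    using that
  proof (induction j)
    case 0
    then show ?case using x by simp
  next
    case (Suc j)
    then have "(\<lambda>k. (x k + (\<Sum>i<j. F (c i) (c' i) k)) + F (c j) (c' j) k) \<in> sums_of_products F S"
      using cc by (intro sums_of_products_add_product) auto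
    then show ?case by (simp add: add.assoc)
  qed
  then show ?thesis unfolding y_eq by simp
qed

lemma sums_of_products_product: "b \<in> S \<Longrightarrow> b' \<in> S \<Longrightarrow> F b b' \<in> sums_of_products F S"
  using sums_of_products_add_product[OF sums_of_products_zero] by fastforce

lemma sums_of_products_sum:
  "finite A \<Longrightarrow> (\<And>a. a \<in> A \<Longrightarrow> f a \<in> sums_of_products F S)
    \<Longrightarrow> (\<lambda>k. \<Sum>a\<in>A. f a k) \<in> sums_of_products F S"
  by (induction A rule: finite_induct) (auto intro: sums_of_products_zero sums_of_products_add)

lemma sums_of_products_subset:
  assumes "(\<lambda>k. 0) \<in> S" and "\<And>x y. x \<in> S \<Longrightarrow> y \<in> S \<Longrightarrow> (\<lambda>k. x k + y k) \<in> S"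
    and "\<And>x y. x \<in> S \<Longrightarrow> y \<in> S \<Longrightarrow> F x y \<in> S"
  shows "sums_of_products F S \<subseteq> S"
proof
  fix z assume "z \<in> sums_of_products F S"
  then obtain n :: nat and b b' where z: "z = (\<lambda>k. \<Sum>i<n. F (b i) (b' i) k)"
    and bb: "\<forall>i<n. b i \<in> S \<and> b' i \<in> S"
    by (blast elim: sums_of_productsE)
  have "(\<lambda>k. \<Sum>i<j. F (b i) (b' i) k) \<in> S" if "j \<le> n" for j
    using that
  proof (induction j)
    case 0
    then show ?case using assms(1) by simp
  next
    case (Suc j)
    then have "(\<lambda>k. (\<Sum>i<j. F (b i) (b' i) k) + F (b j) (b' j) k) \<in> S"
      using bb assms(2,3) by auto
    then show ?case by simp
  qed
  then show "z \<in> S" unfolding z by simp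
qed

locale groupoid_structure =
  fixes G :: "'g set" and d r iv :: "'g \<Rightarrow> 'g" and m :: "'g \<Rightarrow> 'g \<Rightarrow> 'g"
  assumes groupoid: "groupoid G d r iv m"
begin

lemma d_closed: "g \<in> G \<Longrightarrow> d g \<in> G"
  and r_closed: "g \<in> G \<Longrightarrow> r g \<in> G"
  and iv_closed: "g \<in> G \<Longrightarrow> iv g \<in> G"
  and m_closed: "g \<in> G \<Longrightarrow> h \<in> G \<Longrightarrow> d g = r h \<Longrightarrow> m g h \<in> G"
  and r_m: "g \<in> G \<Longrightarrow> h \<in> G \<Longrightarrow> d g = r h \<Longrightarrow> r (m g h) = r g"
  and m_assoc: "g \<in> G \<Longrightarrow> h \<in> G \<Longrightarrow> k \<in> G \<Longrightarrow> d g = r h \<Longrightarrow> d h = r k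
    \<Longrightarrow> m (m g h) k = m g (m h k)"
  and d_d: "g \<in> G \<Longrightarrow> d (d g) = d g"
  and r_d: "g \<in> G \<Longrightarrow> r (d g) = d g"
  and d_r: "g \<in> G \<Longrightarrow> d (r g) = r g"
  and m_d_right: "g \<in> G \<Longrightarrow> m g (d g) = g"
  and m_r_left: "g \<in> G \<Longrightarrow> m (r g) g = g"
  and d_iv: "g \<in> G \<Longrightarrow> d (iv g) = r g"
  and r_iv: "g \<in> G \<Longrightarrow> r (iv g) = d g"
  and m_iv_right: "g \<in> G \<Longrightarrow> m g (iv g) = r g"
  using groupoid unfolding groupoid_def by auto

lemma identity_closed: "e \<in> d ` G \<Longrightarrow> e \<in> G"
  and identity_d: "e \<in> d ` G \<Longrightarrow> d e = e"
  and identity_r: "e \<in> d ` G \<Longrightarrow> r e = e"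
  using d_closed d_d r_d by auto

lemma r_in_identities: "g \<in> G \<Longrightarrow> r g \<in> d ` G"
  by (metis d_iv iv_closed image_eqI)

lemma left_division:
  assumes g: "g \<in> G" and h: "h \<in> G" and "r h = r g"
  shows "m (iv h) g \<in> G" and "d h = r (m (iv h) g)" and "m h (m (iv h) g) = g"
proof -
  have composable: "d (iv h) = r g" using d_iv h \<open>r h = r g\<close> by simp
  show "m (iv h) g \<in> G" using m_closed[OF iv_closed[OF h] g composable] .
  show "d h = r (m (iv h) g)" using r_m[OF iv_closed[OF h] g composable] r_iv h by simp
  have "m h (m (iv h) g) = m (m h (iv h)) g"
    using m_assoc[OF h iv_closed[OF h] g] r_iv h composable by simp
  also have "\<dots> = g" using m_iv_right h \<open>r h = r g\<close> m_r_left g by simp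
  finally show "m h (m (iv h) g) = g" .
qed

end

locale global_crossed_product = groupoid_structure G d r iv m
  for G :: "'g set" and d r iv :: "'g \<Rightarrow> 'g" and m :: "'g \<Rightarrow> 'g \<Rightarrow> 'g" +
  fixes E :: "'g \<Rightarrow> 't::ring set" and \<beta> :: "'g \<Rightarrow> 't \<Rightarrow> 't"
    and uR uL uiR uiL :: "'g \<Rightarrow> 'g \<Rightarrow> 't \<Rightarrow> 't"
  assumes global: "global_action G d r iv m E \<beta> uR uL uiR uiL"
begin

abbreviation B where "B \<equiv> cp_set G E"
abbreviation mul where "mul \<equiv> cp_mult G d r iv m E \<beta> uR"
abbreviation \<beta>inv where "\<beta>inv g \<equiv> inv_into (E (iv g)) (\<beta> g)"

lemma action: "twisted_partial_action G d r iv m E \<beta> uR uL uiR uiL"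
  and E_r: "g \<in> G \<Longrightarrow> E g = E (r g)"
  using global unfolding global_action_def by auto

lemma E_ideal: "g \<in> G \<Longrightarrow> is_ideal (E g) UNIV"
  using action E_r unfolding twisted_partial_action_def by metis

lemma E_zero: "g \<in> G \<Longrightarrow> 0 \<in> E g"
  and E_add: "g \<in> G \<Longrightarrow> a \<in> E g \<Longrightarrow> b \<in> E g \<Longrightarrow> a + b \<in> E g"
  and E_mult_left: "g \<in> G \<Longrightarrow> b \<in> E g \<Longrightarrow> a * b \<in> E g"
  and E_mult_right: "g \<in> G \<Longrightarrow> a \<in> E g \<Longrightarrow> a * b \<in> E g"
  using E_ideal unfolding is_ideal_def by auto

lemma E_iv: "g \<in> G \<Longrightarrow> E (iv g) = E (d g)"
  using E_r[of "iv g"] iv_closed r_iv by auto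

lemma E_m: "g \<in> G \<Longrightarrow> h \<in> G \<Longrightarrow> d g = r h \<Longrightarrow> E (m g h) = E g"
  using E_r[of "m g h"] E_r[of g] m_closed r_m by auto

lemma \<beta>_iso: "g \<in> G \<Longrightarrow> ring_iso_on (\<beta> g) (E (iv g)) (E g)"
  using action unfolding twisted_partial_action_def by auto

lemma \<beta>_mult: "g \<in> G \<Longrightarrow> a \<in> E (iv g) \<Longrightarrow> b \<in> E (iv g) \<Longrightarrow> \<beta> g (a * b) = \<beta> g a * \<beta> g b"
  and \<beta>_add: "g \<in> G \<Longrightarrow> a \<in> E (iv g) \<Longrightarrow> b \<in> E (iv g) \<Longrightarrow> \<beta> g (a + b) = \<beta> g a + \<beta> g b"
  using \<beta>_iso unfolding ring_iso_on_def by auto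

lemma \<beta>_bij: "g \<in> G \<Longrightarrow> bij_betw (\<beta> g) (E (iv g)) (E g)"
  using \<beta>_iso unfolding ring_iso_on_def by auto

lemma \<beta>_in: "g \<in> G \<Longrightarrow> a \<in> E (iv g) \<Longrightarrow> \<beta> g a \<in> E g"
  using \<beta>_bij bij_betw_apply by metis

lemma \<beta>inv_in: "g \<in> G \<Longrightarrow> c \<in> E g \<Longrightarrow> \<beta>inv g c \<in> E (iv g)"
  using \<beta>_bij inv_into_into bij_betw_imp_surj_on by metis

lemma \<beta>_\<beta>inv: "g \<in> G \<Longrightarrow> c \<in> E g \<Longrightarrow> \<beta> g (\<beta>inv g c) = c"
  using \<beta>_bij f_inv_into_f bij_betw_imp_surj_on by metis

lemma \<beta>inv_\<beta>: "g \<in> G \<Longrightarrow> a \<in> E (iv g) \<Longrightarrow> \<beta>inv g (\<beta> g a) = a"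
  using \<beta>_bij inv_into_f_f bij_betw_imp_inj_on by metis

lemma \<beta>_zero: "g \<in> G \<Longrightarrow> \<beta> g 0 = 0"
  using \<beta>_add[of g 0 0] E_zero iv_closed by simp

lemma \<beta>inv_zero: "g \<in> G \<Longrightarrow> \<beta>inv g 0 = 0"
  using \<beta>inv_\<beta>[of g 0] \<beta>_zero E_zero iv_closed by simp

lemma \<beta>_identity: "e \<in> d ` G \<Longrightarrow> a \<in> E e \<Longrightarrow> \<beta> e a = a"
  using action unfolding twisted_partial_action_def by auto

lemma idealprod_E: "g \<in> G \<Longrightarrow> idealprod (E g) (E g) = E g"
  and u_r_left: "g \<in> G \<Longrightarrow> a \<in> E g \<Longrightarrow> uR (r g) g a = a"
  and u_d_right: "g \<in> G \<Longrightarrow> a \<in> E g \<Longrightarrow> uR g (d g) a = a"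
  using action d_closed[of g] r_d[of g] d_d[of g] unfolding twisted_partial_action_def
  by metis+

lemma u_invertible:
  "g \<in> G \<Longrightarrow> h \<in> G \<Longrightarrow> d g = r h \<Longrightarrow> inv_mult (E g) (uR g h) (uL g h) (uiR g h) (uiL g h)"
  using action idealprod_E E_m unfolding twisted_partial_action_def by metis

lemma u_in: "g \<in> G \<Longrightarrow> h \<in> G \<Longrightarrow> d g = r h \<Longrightarrow> a \<in> E g \<Longrightarrow> uR g h a \<in> E g"
  using u_invertible unfolding inv_mult_def is_mult_def by blast

lemma u_zero: "g \<in> G \<Longrightarrow> h \<in> G \<Longrightarrow> d g = r h \<Longrightarrow> uR g h 0 = 0"
  using u_invertible[of g h] E_zero[of g] unfolding inv_mult_def is_mult_def
  by (metis add_cancel_right_right)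

lemma uiR_in: "g \<in> G \<Longrightarrow> h \<in> G \<Longrightarrow> d g = r h \<Longrightarrow> a \<in> E g \<Longrightarrow> uiR g h a \<in> E g"
  using u_invertible unfolding inv_mult_def is_mult_def by blast

lemma uR_uiR: "g \<in> G \<Longrightarrow> h \<in> G \<Longrightarrow> d g = r h \<Longrightarrow> a \<in> E g \<Longrightarrow> uR g h (uiR g h a) = a"
  using u_invertible unfolding inv_mult_def by blast

lemma uiR_mult_left:
  "g \<in> G \<Longrightarrow> h \<in> G \<Longrightarrow> d g = r h \<Longrightarrow> a \<in> E g \<Longrightarrow> b \<in> E g
    \<Longrightarrow> uiR g h (b * a) = b * uiR g h a"
  using u_invertible unfolding inv_mult_def is_mult_def by blast

lemma B_zero: "(\<lambda>k. 0) \<in> B"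
  by (rule cp_setI) (auto simp: E_zero)

lemma B_add: "x \<in> B \<Longrightarrow> y \<in> B \<Longrightarrow> (\<lambda>k. x k + y k) \<in> B"
proof (rule cp_setI)
  assume x: "x \<in> B" and y: "y \<in> B"
  have "{k. x k + y k \<noteq> 0} \<subseteq> {k. x k \<noteq> 0} \<union> {k. y k \<noteq> 0}" by auto
  then show "finite {k. x k + y k \<noteq> 0}"
    using cp_setD(1)[OF x] cp_setD(1)[OF y] by (auto intro: finite_subset)
  show "k \<in> G" if "x k + y k \<noteq> 0" for k using that cp_setD(2)[OF x] cp_setD(2)[OF y] by force
  show "x k + y k \<in> E k" if "k \<in> G" for k using that cp_setD(3)[OF x] cp_setD(3)[OF y] E_add by blast
qed

lemma cp_single_in_B: "g \<in> G \<Longrightarrow> c \<in> E g \<Longrightarrow> cp_single g c \<in> B"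
  using cp_single_in_cp_set E_zero by metis

lemma mul_closed:
  assumes x: "x \<in> B" and y: "y \<in> B"
  shows "mul x y \<in> B"
proof (rule cp_setI)
  let ?P = "\<lambda>k. {(g, h). g \<in> G \<and> h \<in> G \<and> x g \<noteq> 0 \<and> y h \<noteq> 0 \<and> d g = r h \<and> m g h = k}"
  let ?f = "\<lambda>p. uR (fst p) (snd p) (\<beta> (fst p) (\<beta>inv (fst p) (x (fst p)) * y (snd p)))"
  have mul_eq: "mul x y k = sum ?f (?P k)" for k by (simp add: cp_mult_def)
  have nonzero: "?P k \<noteq> {}" if "mul x y k \<noteq> 0" for k
    using that mul_eq[of k] by force
  have "{k. mul x y k \<noteq> 0} \<subseteq> (\<lambda>(g, h). m g h) ` ({g. x g \<noteq> 0} \<times> {h. y h \<noteq> 0})"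
    using nonzero by fastforce
  then show "finite {k. mul x y k \<noteq> 0}"
    using cp_setD(1)[OF x] cp_setD(1)[OF y] by (auto intro: finite_subset)
  show "k \<in> G" if "mul x y k \<noteq> 0" for k
    using nonzero[OF that] m_closed by blast
  show "mul x y k \<in> E k" if k: "k \<in> G" for k
    unfolding mul_eq
  proof (rule is_ideal_sum[OF E_ideal[OF k]])
    fix p assume "p \<in> ?P k"
    then obtain g h where p: "p = (g, h)" and gh: "g \<in> G" "h \<in> G" "d g = r h" "m g h = k"
      by auto
    have "y h \<in> E (iv g)" using cp_setD(3)[OF y gh(2)] E_r[OF gh(2)] E_iv[OF gh(1)] gh(3) by simp
    then have "\<beta>inv g (x g) * y h \<in> E (iv g)" using E_mult_left iv_closed gh(1) by blast
    then have "?f p \<in> E g" using p \<beta>_in u_in gh by simp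
    then show "?f p \<in> E k" using E_m gh by metis
  qed
qed

lemma mul_identity_supported_right:
  assumes x: "x \<in> B" and z: "z \<in> B" and z_supp: "\<And>k. z k \<noteq> 0 \<Longrightarrow> k \<in> d ` G"
  shows "mul x z = (\<lambda>k. x k * \<beta> k (z (d k)))"
proof
  fix k
  let ?P = "{(g, h). g \<in> G \<and> h \<in> G \<and> x g \<noteq> 0 \<and> z h \<noteq> 0 \<and> d g = r h \<and> m g h = k}"
  let ?f = "\<lambda>p. uR (fst p) (snd p) (\<beta> (fst p) (\<beta>inv (fst p) (x (fst p)) * z (snd p)))"
  have mul_eq: "mul x z k = sum ?f ?P" by (simp add: cp_mult_def)
  show "mul x z k = x k * \<beta> k (z (d k))"
  proof (cases "k \<in> G")
    case False
    then have "?P = {}" using m_closed by auto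
    then have "mul x z k = 0" using mul_eq by (simp only: sum.empty)
    then show ?thesis using cp_setD(2)[OF x False] by simp
  next
    case k: True
    have "?P \<subseteq> {(k, d k)}"
      using z_supp identity_r m_d_right by fastforce
    have zdk: "z (d k) \<in> E (iv k)" using cp_setD(3)[OF z d_closed[OF k]] E_iv[OF k] by simp
    have xk: "x k \<in> E k" using cp_setD(3)[OF x k] .
    have summand: "?f (k, d k) = x k * \<beta> k (z (d k))"
      using \<beta>_mult[OF k \<beta>inv_in[OF k xk] zdk] \<beta>_\<beta>inv[OF k xk] u_d_right[OF k] E_mult_right[OF k xk]
      by simp
    have "(k, d k) \<notin> ?P \<Longrightarrow> x k = 0 \<or> z (d k) = 0"
      using k d_closed r_d m_d_right by auto
    then have "sum ?f ?P = ?f (k, d k)"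
      using \<open>?P \<subseteq> {(k, d k)}\<close> summand \<beta>_zero[OF k] by (intro sum_subset_singleton) auto
    then show ?thesis using mul_eq summand by simp
  qed
qed

lemma mul_identity_supported_left:
  assumes x: "x \<in> B" and z: "z \<in> B" and z_supp: "\<And>k. z k \<noteq> 0 \<Longrightarrow> k \<in> d ` G"
  shows "mul z x = (\<lambda>k. z (r k) * x k)"
proof
  fix k
  let ?P = "{(g, h). g \<in> G \<and> h \<in> G \<and> z g \<noteq> 0 \<and> x h \<noteq> 0 \<and> d g = r h \<and> m g h = k}"
  let ?f = "\<lambda>p. uR (fst p) (snd p) (\<beta> (fst p) (\<beta>inv (fst p) (z (fst p)) * x (snd p)))"
  have mul_eq: "mul z x k = sum ?f ?P" by (simp add: cp_mult_def)
  show "mul z x k = z (r k) * x k"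
  proof (cases "k \<in> G")
    case False
    then have "?P = {}" using m_closed by auto
    then have "mul z x k = 0" using mul_eq by (simp only: sum.empty)
    then show ?thesis using cp_setD(2)[OF x False] by simp
  next
    case k: True
    have "?P \<subseteq> {(r k, k)}"
    proof
      fix p assume "p \<in> ?P"
      then obtain g h where p: "p = (g, h)" "h \<in> G" "z g \<noteq> 0" "d g = r h" "m g h = k"
        by auto
      then have "g = r h" using z_supp identity_d by metis
      then show "p \<in> {(r k, k)}" using p m_r_left by auto
    qed
    have rk: "r k \<in> d ` G" using r_in_identities[OF k] .
    have zrk: "z (r k) \<in> E (r k)" using cp_setD(3)[OF z r_closed[OF k]] .
    have xk: "x k \<in> E (r k)" using cp_setD(3)[OF x k] E_r[OF k] by simp
    have "\<beta>inv (r k) (z (r k)) = z (r k)"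
      using \<beta>inv_\<beta>[of "r k" "z (r k)"] \<beta>_identity[OF rk zrk] E_iv d_r r_closed k zrk by simp
    then have summand: "?f (r k, k) = z (r k) * x k"
      using \<beta>_identity[OF rk E_mult_left[OF r_closed[OF k] xk]] u_r_left[OF k]
        E_mult_left[OF k cp_setD(3)[OF x k]]
      by simp
    have "(r k, k) \<notin> ?P \<Longrightarrow> z (r k) = 0 \<or> x k = 0"
      using k r_closed d_r m_r_left by auto
    then have "sum ?f ?P = ?f (r k, k)"
      using \<open>?P \<subseteq> {(r k, k)}\<close> summand by (intro sum_subset_singleton) auto
    then show ?thesis using mul_eq summand by simp
  qed
qed

lemma mul_cp_single:
  assumes g: "g \<in> G" and h: "h \<in> G" and gh: "d g = r h" and a: "a \<in> E g"
  shows "mul (cp_single g a) (cp_single h b) = cp_single (m g h) (uR g h (\<beta> g (\<beta>inv g a * b)))"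
proof
  fix k
  let ?P = "{(g', h'). g' \<in> G \<and> h' \<in> G \<and> cp_single g a g' \<noteq> 0 \<and> cp_single h b h' \<noteq> 0
    \<and> d g' = r h' \<and> m g' h' = k}"
  let ?f = "\<lambda>p. uR (fst p) (snd p)
    (\<beta> (fst p) (\<beta>inv (fst p) (cp_single g a (fst p)) * cp_single h b (snd p)))"
  have mul_eq: "mul (cp_single g a) (cp_single h b) k = sum ?f ?P" by (simp add: cp_mult_def)
  have "?P \<subseteq> {(g, h)}" by (auto simp: cp_single_def split: if_splits)
  moreover have "(g, h) \<notin> ?P \<Longrightarrow> k = m g h \<Longrightarrow> a = 0 \<or> b = 0"
    using g h gh by (auto simp: cp_single_def)
  ultimately have "k = m g h \<Longrightarrow> sum ?f ?P = ?f (g, h)"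
    using \<beta>inv_zero[OF g] \<beta>_zero[OF g] u_zero[OF g h gh]
    by (intro sum_subset_singleton) (auto simp: cp_single_def)
  moreover have "k \<noteq> m g h \<Longrightarrow> ?P = {}" by (auto simp: cp_single_def split: if_splits)
  ultimately show "mul (cp_single g a) (cp_single h b) k
      = cp_single (m g h) (uR g h (\<beta> g (\<beta>inv g a * b))) k"
    using mul_eq by (auto simp: cp_single_def)
qed

end

locale crossed_product_globalization = global_crossed_product G d r iv m E \<beta> uR uL uiR uiL
  for G :: "'g set" and d r iv :: "'g \<Rightarrow> 'g" and m :: "'g \<Rightarrow> 'g \<Rightarrow> 'g"
    and E :: "'g \<Rightarrow> 't::ring set" and \<beta> :: "'g \<Rightarrow> 't \<Rightarrow> 't"
    and uR uL uiR uiL :: "'g \<Rightarrow> 'g \<Rightarrow> 't \<Rightarrow> 't" +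
  fixes D :: "'g \<Rightarrow> 'r::ring set" and \<alpha> :: "'g \<Rightarrow> 'r \<Rightarrow> 'r"
    and wR wL :: "'g \<Rightarrow> 'g \<Rightarrow> 'r \<Rightarrow> 'r" and one :: "'g \<Rightarrow> 'r" and \<phi> :: "'g \<Rightarrow> 'r \<Rightarrow> 't"
  assumes finite_identities: "finite (d ` G)"
    and units: "\<forall>e\<in>d ` G. one e \<in> D e \<and> (\<forall>x\<in>D e. one e * x = x \<and> x * one e = x)"
    and globalization: "globalization G d r iv m D \<alpha> wR wL E \<beta> uR uL \<phi>"
begin

abbreviation oneA where "oneA \<equiv> \<lambda>k. if k \<in> d ` G then \<phi> k (one k) else 0"
abbreviation B1B where "B1B \<equiv> sums_of_products (\<lambda>b b'. mul (mul b oneA) b') B"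

abbreviation Dd where "Dd g \<equiv> \<beta> g ` \<phi> (d g) ` D (d g)"
abbreviation Dr where "Dr g \<equiv> \<phi> (r g) ` D (r g)"
abbreviation one_Dd where "one_Dd g \<equiv> \<beta> g (\<phi> (d g) (one (d g)))"
abbreviation one_Dr where "one_Dr g \<equiv> \<phi> (r g) (one (r g))"

lemma \<phi>_mono: "e \<in> d ` G \<Longrightarrow> ring_mono_on (\<phi> e) (D e) (E e)"
  and \<phi>_ideal: "e \<in> d ` G \<Longrightarrow> is_ideal (\<phi> e ` D e) (E e)"
  and E_sum_sets: "g \<in> G \<Longrightarrow> E g = sum_sets {h\<in>G. r h = r g} Dd"
  and Dr_inter_Dd: "g \<in> G \<Longrightarrow> \<phi> (r g) ` D g = Dr g \<inter> Dd g"
proof -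
  note parts = globalization[unfolded globalization_def]
  show "e \<in> d ` G \<Longrightarrow> ring_mono_on (\<phi> e) (D e) (E e)"
    and "e \<in> d ` G \<Longrightarrow> is_ideal (\<phi> e ` D e) (E e)"
    using conjunct1[OF parts] by auto
  show "g \<in> G \<Longrightarrow> E g = sum_sets {h\<in>G. r h = r g} Dd"
    using conjunct1[OF conjunct2[OF parts]] by auto
  show "g \<in> G \<Longrightarrow> \<phi> (r g) ` D g = Dr g \<inter> Dd g"
    using conjunct1[OF conjunct2[OF conjunct2[OF parts]]] by auto
qed

lemma \<phi>_in: "e \<in> d ` G \<Longrightarrow> a \<in> D e \<Longrightarrow> \<phi> e a \<in> E e"
  and \<phi>_mult: "e \<in> d ` G \<Longrightarrow> a \<in> D e \<Longrightarrow> b \<in> D e \<Longrightarrow> \<phi> e (a * b) = \<phi> e a * \<phi> e b"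
  using \<phi>_mono unfolding ring_mono_on_def by auto

lemma one_in: "e \<in> d ` G \<Longrightarrow> one e \<in> D e"
  and one_left: "e \<in> d ` G \<Longrightarrow> a \<in> D e \<Longrightarrow> one e * a = a"
  and one_right: "e \<in> d ` G \<Longrightarrow> a \<in> D e \<Longrightarrow> a * one e = a"
  using units by auto

lemma Dd_subset: "g \<in> G \<Longrightarrow> Dd g \<subseteq> E g"
  using \<phi>_in \<beta>_in E_iv by auto

lemma one_Dd_in: "g \<in> G \<Longrightarrow> one_Dd g \<in> Dd g"
  using one_in by blast

lemma one_Dd_neutral:
  assumes g: "g \<in> G" and c: "c \<in> Dd g"
  shows "c * one_Dd g = c" and "one_Dd g * c = c"
proof -
  obtain a where a: "a \<in> D (d g)" and c_eq: "c = \<beta> g (\<phi> (d g) a)" using c by blast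
  have e: "d g \<in> d ` G" using g by blast
  have "\<phi> (d g) a \<in> E (iv g)" "\<phi> (d g) (one (d g)) \<in> E (iv g)"
    using \<phi>_in[OF e] a one_in[OF e] E_iv[OF g] by auto
  then show "c * one_Dd g = c" and "one_Dd g * c = c"
    using c_eq \<beta>_mult[OF g] \<phi>_mult[OF e] a one_in[OF e] one_left[OF e a] one_right[OF e a]
    by metis+
qed

lemma mult_one_Dd_in:
  assumes g: "g \<in> G" and x: "x \<in> E g"
  shows "x * one_Dd g \<in> Dd g"
proof -
  have e: "d g \<in> d ` G" using g by blast
  have x': "\<beta>inv g x \<in> E (d g)" using \<beta>inv_in[OF g x] E_iv[OF g] by simp
  have "\<beta>inv g x * \<phi> (d g) (one (d g)) \<in> \<phi> (d g) ` D (d g)"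
    using \<phi>_ideal[OF e] x' one_in[OF e] unfolding is_ideal_def by blast
  moreover have "x * one_Dd g = \<beta> g (\<beta>inv g x * \<phi> (d g) (one (d g)))"
    using \<beta>_mult[OF g \<beta>inv_in[OF g x]] \<phi>_in[OF e one_in[OF e]] E_iv[OF g] \<beta>_\<beta>inv[OF g x]
    by simp
  ultimately show ?thesis by blast
qed

lemma Dr_ideal: "g \<in> G \<Longrightarrow> is_ideal (Dr g) (E g)"
  using \<phi>_ideal[OF r_in_identities] E_r by metis

lemma Dr_subset: "g \<in> G \<Longrightarrow> Dr g \<subseteq> E g"
  and Dr_mult_right: "g \<in> G \<Longrightarrow> a \<in> Dr g \<Longrightarrow> x \<in> E g \<Longrightarrow> a * x \<in> Dr g"
  using Dr_ideal unfolding is_ideal_def by blast+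

lemma one_Dr_neutral:
  assumes g: "g \<in> G" and c: "c \<in> Dr g"
  shows "one_Dr g * c = c"
proof -
  have e: "r g \<in> d ` G" using r_in_identities[OF g] .
  obtain a where "a \<in> D (r g)" and "c = \<phi> (r g) a" using c by blast
  then show ?thesis using \<phi>_mult[OF e] one_in[OF e] one_left[OF e] by metis
qed

lemma one_Dr_mult_in: "g \<in> G \<Longrightarrow> x \<in> E g \<Longrightarrow> one_Dr g * x \<in> Dr g"
  using Dr_mult_right one_in[OF r_in_identities] by blast

lemma oneA_in_B: "oneA \<in> B"
proof (rule cp_setI)
  have "{k. oneA k \<noteq> 0} \<subseteq> d ` G" by (auto split: if_splits)
  then show "finite {k. oneA k \<noteq> 0}" using finite_identities by (rule finite_subset)
  show "k \<in> G" if "oneA k \<noteq> 0" for k using that identity_closed by (auto split: if_splits)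
  show "oneA k \<in> E k" if "k \<in> G" for k using that \<phi>_in one_in E_zero by auto
qed

lemma mul_oneA_right: "x \<in> B \<Longrightarrow> mul x oneA = (\<lambda>k. x k * one_Dd k)"
  using mul_identity_supported_right[OF _ oneA_in_B] cp_setD(2)[of x G E] by (fastforce split: if_splits)

lemma mul_oneA_left: "x \<in> B \<Longrightarrow> mul oneA x = (\<lambda>k. one_Dr k * x k)"
  using mul_identity_supported_left[OF _ oneA_in_B] cp_setD(2)[of x G E] r_in_identities
  by (fastforce split: if_splits)

lemma mul_oneA_both: "x \<in> B \<Longrightarrow> mul (mul oneA x) oneA = (\<lambda>k. one_Dr k * x k * one_Dd k)"
  using mul_oneA_right[OF mul_closed[OF oneA_in_B]] mul_oneA_left by simp

lemma B_oneA: "(\<lambda>b. mul b oneA) ` B = cp_set G Dd"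
proof -
  have "(\<lambda>b. mul b oneA) ` B = (\<lambda>x k. x k * one_Dd k) ` B"
    using mul_oneA_right by (rule image_cong[OF refl])
  also have "\<dots> = cp_set G Dd"
    by (rule cp_set_pointwise_retraction[OF mult_one_Dd_in Dd_subset one_Dd_neutral(1)]) simp_all
  finally show ?thesis .
qed

lemma oneA_B: "(\<lambda>b. mul oneA b) ` B = cp_set G Dr"
proof -
  have "(\<lambda>b. mul oneA b) ` B = (\<lambda>x k. one_Dr k * x k) ` B"
    using mul_oneA_left by (rule image_cong[OF refl])
  also have "\<dots> = cp_set G Dr"
    by (rule cp_set_pointwise_retraction[OF one_Dr_mult_in Dr_subset one_Dr_neutral]) simp_all
  finally show ?thesis .
qed

lemma oneA_B_oneA: "(\<lambda>b. mul (mul oneA b) oneA) ` B = cp_set G (\<lambda>g. \<phi> (r g) ` D g)"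
proof -
  have "(\<lambda>b. mul (mul oneA b) oneA) ` B = (\<lambda>x k. one_Dr k * x k * one_Dd k) ` B"
    using mul_oneA_both by (rule image_cong[OF refl])
  also have "\<dots> = cp_set G (\<lambda>g. Dr g \<inter> Dd g)"
  proof (rule cp_set_pointwise_retraction)
    fix k c assume k: "k \<in> G" and c: "c \<in> E k"
    have "one_Dr k * c \<in> Dr k" using one_Dr_mult_in[OF k c] .
    then show "one_Dr k * c * one_Dd k \<in> Dr k \<inter> Dd k"
      using Dr_mult_right[OF k] Dr_subset[OF k] mult_one_Dd_in[OF k] one_Dd_in[OF k] Dd_subset[OF k]
      by blast
  next
    show "Dr k \<inter> Dd k \<subseteq> E k" if "k \<in> G" for k using Dr_subset[OF that] by blast
  next
    show "one_Dr k * c * one_Dd k = c" if "k \<in> G" and "c \<in> Dr k \<inter> Dd k" for k c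
      using one_Dr_neutral[of k c] one_Dd_neutral(1)[of k c] that by simp
  qed simp
  also have "\<dots> = cp_set G (\<lambda>g. \<phi> (r g) ` D g)"
    by (rule cp_set_cong) (rule Dr_inter_Dd[symmetric])
  finally show ?thesis .
qed

lemma cp_single_Dd_in_B1B:
  assumes g: "g \<in> G" and h: "h \<in> G" and rh: "r h = r g" and c: "c \<in> Dd h"
  shows "cp_single g c \<in> B1B"
proof -
  define t where "t = m (iv h) g"
  have t: "t \<in> G" "d h = r t" "m h t = g" using left_division[OF g h rh] unfolding t_def by auto
  have cE: "c \<in> E h" using c Dd_subset[OF h] by blast
  have c': "uiR h t c \<in> E h" using uiR_in[OF h t(1,2) cE] .
  define y where "y = \<beta>inv h (uiR h t c)"
  have y: "y \<in> E t" using \<beta>inv_in[OF h c'] E_iv[OF h] E_r[OF t(1)] t(2) unfolding y_def by simp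
  have one_h: "one_Dd h \<in> E h" using one_Dd_in[OF h] Dd_subset[OF h] by blast
  have idempotent: "mul (cp_single h (one_Dd h)) oneA = cp_single h (one_Dd h)"
    unfolding mul_oneA_right[OF cp_single_in_B[OF h one_h]]
    using one_Dd_neutral(1)[OF h one_Dd_in[OF h]] by (intro ext) (simp add: cp_single_def)
  have "\<beta> h (\<beta>inv h (one_Dd h) * y) = one_Dd h * uiR h t c"
    using \<beta>_mult[OF h \<beta>inv_in[OF h one_h]] \<beta>inv_in[OF h c'] \<beta>_\<beta>inv[OF h one_h] \<beta>_\<beta>inv[OF h c']
    unfolding y_def by simp
  also have "\<dots> = uiR h t (one_Dd h * c)" using uiR_mult_left[OF h t(1,2) cE one_h] by simp
  also have "\<dots> = uiR h t c" using one_Dd_neutral(2)[OF h c] by simp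
  finally have "uR h t (\<beta> h (\<beta>inv h (one_Dd h) * y)) = c" using uR_uiR[OF h t(1,2) cE] by simp
  then have "cp_single g c = mul (mul (cp_single h (one_Dd h)) oneA) (cp_single t y)"
    using idempotent mul_cp_single[OF h t(1,2) one_h] t(3) by simp
  also have "\<dots> \<in> B1B"
    using cp_single_in_B[OF h one_h] cp_single_in_B[OF t(1) y] by (rule sums_of_products_product)
  finally show ?thesis .
qed

lemma cp_single_in_B1B:
  assumes g: "g \<in> G" and c: "c \<in> E g"
  shows "cp_single g c \<in> B1B"
proof -
  obtain n :: nat and f j where c_eq: "c = (\<Sum>i<n. f i)"
    and fj: "\<forall>i<n. j i \<in> G \<and> r (j i) = r g \<and> f i \<in> Dd (j i)"
    using c E_sum_sets[OF g] unfolding sum_sets_def by auto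
  have "cp_single g c = (\<lambda>k. \<Sum>i\<in>{..<n}. cp_single g (f i) k)"
    unfolding c_eq by (rule cp_single_sum)
  also have "\<dots> \<in> B1B"
    using fj cp_single_Dd_in_B1B[OF g] by (intro sums_of_products_sum) auto
  finally show ?thesis .
qed

lemma B1B_eq_B: "B1B = B"
proof
  show "B1B \<subseteq> B"
    by (rule sums_of_products_subset) (auto intro: B_zero B_add mul_closed oneA_in_B)
  show "B \<subseteq> B1B"
  proof
    fix b assume b: "b \<in> B"
    have "b = (\<lambda>k. \<Sum>g\<in>{k. b k \<noteq> 0}. cp_single g (b g) k)"
      by (rule finite_support_sum_single[OF cp_setD(1)[OF b]])
    also have "\<dots> \<in> B1B"
      using cp_setD[OF b] by (intro sums_of_products_sum cp_single_in_B1B) auto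
    finally show "b \<in> B1B" .
  qed
qed

end

theorem mainTheorem3:
  fixes G :: "'g set" and d r iv :: "'g \<Rightarrow> 'g" and m :: "'g \<Rightarrow> 'g \<Rightarrow> 'g"
    and D :: "'g \<Rightarrow> 'r::ring set" and \<alpha> :: "'g \<Rightarrow> 'r \<Rightarrow> 'r"
    and wR wL wiR wiL :: "'g \<Rightarrow> 'g \<Rightarrow> 'r \<Rightarrow> 'r"
    and one :: "'g \<Rightarrow> 'r"
    and E :: "'g \<Rightarrow> 't::ring set" and \<beta> :: "'g \<Rightarrow> 't \<Rightarrow> 't"
    and uR uL uiR uiL :: "'g \<Rightarrow> 'g \<Rightarrow> 't \<Rightarrow> 't"
    and \<phi> :: "'g \<Rightarrow> 'r \<Rightarrow> 't"
  assumes grpd: "groupoid G d r iv m"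
    and fin: "finite (d ` G)"
    and alpha: "twisted_partial_action G d r iv m D \<alpha> wR wL wiR wiL"
    and units: "\<forall>e\<in>d ` G. one e \<in> D e \<and> (\<forall>x\<in>D e. one e * x = x \<and> x * one e = x)"
    and beta: "global_action G d r iv m E \<beta> uR uL uiR uiL"
    and glob: "globalization G d r iv m D \<alpha> wR wL E \<beta> uR uL \<phi>"
  defines "B \<equiv> cp_set G E"
    and "oneA \<equiv> (\<lambda>k. if k \<in> d ` G then \<phi> k (one k) else 0)"
    and "mult \<equiv> cp_mult G d r iv m E \<beta> uR"
  shows "((\<lambda>b. mult b oneA) ` B = cp_set G (\<lambda>g. \<beta> g ` \<phi> (d g) ` D (d g))) \<and>
    ((\<lambda>b. mult oneA b) ` B = cp_set G (\<lambda>g. \<phi> (r g) ` D (r g))) \<and>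
    ((\<lambda>b. mult (mult oneA b) oneA) ` B = cp_set G (\<lambda>g. \<phi> (r g) ` D g)) \<and>
    ({(\<lambda>k. \<Sum>i<n. mult (mult (b i) oneA) (b' i) k) | (n::nat) b b'.
            \<forall>i<n. b i \<in> B \<and> b' i \<in> B} = B)"
proof -
  interpret crossed_product_globalization G d r iv m E \<beta> uR uL uiR uiL D \<alpha> wR wL one \<phi>
    using grpd beta fin units glob by unfold_locales
  show ?thesis
    using B_oneA oneA_B oneA_B_oneA B1B_eq_B
    unfolding B_def oneA_def mult_def sums_of_products_def by simp
qed

end
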